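(* For $n\ge1$ and $0\le k<n$, $$|\mathbf{I}_{n,k}(110)|=|\mathbf{I}_{n-1}(110)|-\sum_{j=k+1}^{n-3}|\mathbf{I}_{n-2,j}(110)|.$$
   Context: An inversion sequence of length $n$ is an integer sequence $e=e_1\dots e_n$ with $0\le e_i<i$ for all $i$; $\mathbf{I}_n$ denotes the set of these. The reduction of an integer word replaces every occurrence of its $i$-th smallest distinct value by $i-1$. $e$ contains the consecutive pattern $p$ of length $m$ if some $e_i\dots e_{i+m-1}$ has reduction $p$, and avoids it otherwise; $\mathbf{I}_n(p)$ is the set of $e\in\mathbf{I}_n$ avoiding $p$ (so avoiding $110$ means no $i$ with $e_i=e_{i+1}>e_{i+2}$). $\mathbf{I}_{n,k}(p)=\{e\in\mathbf{I}_n(p):e_n=k\}$, which is empty for $k\ge n$. Conventions: $|\mathbf{I}_0(p)|=1$ and $|\mathbf{I}_{n,j}(p)|=0$ whenever $n\le 0$ (as $j\ge n$) or $n<0$; empty sums are $0$. *)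

theory Defs
  imports Main
begin

(* Inversion sequences of length n, as lists e with e ! i = e_{i+1}; condition 0 <= e_{i+1} < i+1 *)
definition inv_seqs :: "nat \<Rightarrow> nat list set" where
  "inv_seqs n = {e. length e = n \<and> (\<forall>i<n. e ! i < i + 1)}"

definition reduction :: "nat list \<Rightarrow> nat list" where
  "reduction w = map (\<lambda>x. card {y \<in> set w. y < x}) w"

definition contains_pat :: "nat list \<Rightarrow> nat list \<Rightarrow> bool" where
  "contains_pat p e \<longleftrightarrow>
     (\<exists>i. i + length p \<le> length e \<and> reduction (take (length p) (drop i e)) = p)"

definition avoid_seqs :: "nat list \<Rightarrow> nat \<Rightarrow> nat list set" where
  "avoid_seqs p n = {e \<in> inv_seqs n. \<not> contains_pat p e}"

(* |I_n(p)| with conventions: 1 for n = 0 (the empty sequence), 0 for n < 0 *)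
definition cntI :: "nat list \<Rightarrow> int \<Rightarrow> int" where
  "cntI p n = (if n < 0 then 0 else int (card (avoid_seqs p (nat n))))"

definition cntIk :: "nat list \<Rightarrow> int \<Rightarrow> int \<Rightarrow> int" where
  "cntIk p n k = (if n \<le> 0 then 0
     else int (card {e \<in> avoid_seqs p (nat n). int (last e) = k}))"

end

theory Submission imports Defs begin

text \<open>
  A word contains the consecutive pattern 110 iff it has a factor [y, y, z] with z < y. Hence
  appending x \<le> m to an avoider e of length m yields an avoider unless e ends in a plateau
  [y, y] with x < y. So the avoiders of length m + 1 ending in k are in bijection with the
  avoiders of length m that do not end in a plateau above k, and the avoiders of length m ending
  in a plateau [j, j] with k < j are obtained from the avoiders of length m - 1 ending in j by
  repeating their last entry; such j satisfy j \<le> m - 2.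
\<close>

lemma length_reduction [simp]: "length (reduction w) = length w"
  by (simp add: reduction_def)

lemma contains_pat_iff_factor:
  "contains_pat p e \<longleftrightarrow> (\<exists>u w v. e = u @ w @ v \<and> reduction w = p)"
proof
  assume "contains_pat p e"
  then obtain i where "i + length p \<le> length e" "reduction (take (length p) (drop i e)) = p"
    unfolding contains_pat_def by blast
  moreover have "e = take i e @ take (length p) (drop i e) @ drop (length p) (drop i e)"
    by (metis append_take_drop_id)
  ultimately show "\<exists>u w v. e = u @ w @ v \<and> reduction w = p"
    by blast
next
  assume "\<exists>u w v. e = u @ w @ v \<and> reduction w = p"
  then obtain u w v where "e = u @ w @ v" "reduction w = p"
    by blast
  then show "contains_pat p e"
    unfolding contains_pat_def by (intro exI[of _ "length u"]) auto
qed

lemma Collect_mem_insert_conj: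
  "{y \<in> insert a A. P y} = (if P a then insert a {y \<in> A. P y} else {y \<in> A. P y})"
  by auto

lemma reduction_eq_110_iff: "reduction [a, b, c] = [1, 1, 0] \<longleftrightarrow> a = b \<and> c < b"
  \<comment> \<open>once the order of a, b, c is fixed, each filtered set is an explicit finite set\<close>
  unfolding reduction_def list.map list.set Collect_mem_insert_conj empty_iff
    Collect_empty_eq_bot bot_set_def[symmetric]
  by (cases a b rule: linorder_cases; cases b c rule: linorder_cases; cases a c rule: linorder_cases)
    simp_all

lemma contains_110_iff:
  "contains_pat [1, 1, 0] e \<longleftrightarrow> (\<exists>u y z v. e = u @ [y, y, z] @ v \<and> z < y)"
proof -
  have factor: "reduction w = [1, 1, 0] \<longleftrightarrow> (\<exists>y z. w = [y, y, z] \<and> z < y)" for w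
  proof
    assume red: "reduction w = [1, 1, 0]"
    then have "length w = 3"
      using length_reduction[of w] by simp
    then obtain a b c where w: "w = [a, b, c]"
      by (auto simp: numeral_3_eq_3 length_Suc_conv)
    show "\<exists>y z. w = [y, y, z] \<and> z < y"
      using red unfolding w reduction_eq_110_iff by blast
  next
    assume "\<exists>y z. w = [y, y, z] \<and> z < y"
    then obtain y z where "w = [y, y, z]" "z < y"
      by blast
    then show "reduction w = [1, 1, 0]"
      using reduction_eq_110_iff[of y y z] by simp
  qed
  show ?thesis
    unfolding contains_pat_iff_factor factor by blast
qed

definition ends_in_plateau_above :: "nat \<Rightarrow> nat list \<Rightarrow> bool" where
  "ends_in_plateau_above x e \<longleftrightarrow> (\<exists>d y. e = d @ [y, y] \<and> x < y)"

lemma contains_110_snoc: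
  "contains_pat [1, 1, 0] (e @ [x]) \<longleftrightarrow> contains_pat [1, 1, 0] e \<or> ends_in_plateau_above x e"
proof
  assume "contains_pat [1, 1, 0] (e @ [x])"
  then obtain u y z v where uv: "e @ [x] = u @ [y, y, z] @ v" "z < y"
    unfolding contains_110_iff by blast
  show "contains_pat [1, 1, 0] e \<or> ends_in_plateau_above x e"
  proof (cases v rule: rev_cases)
    case Nil
    with uv show ?thesis
      unfolding ends_in_plateau_above_def by auto
  next
    case (snoc v' x')
    with uv have "e = u @ [y, y, z] @ v'"
      by simp
    with uv show ?thesis
      unfolding contains_110_iff by blast
  qed
next
  assume "contains_pat [1, 1, 0] e \<or> ends_in_plateau_above x e"
  then show "contains_pat [1, 1, 0] (e @ [x])"
  proof
    assume "contains_pat [1, 1, 0] e"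
    then obtain u y z v where "e = u @ [y, y, z] @ v" "z < y"
      unfolding contains_110_iff by blast
    then have "e @ [x] = u @ [y, y, z] @ (v @ [x]) \<and> z < y"
      by simp
    then show ?thesis
      unfolding contains_110_iff by blast
  next
    assume "ends_in_plateau_above x e"
    then obtain d y where "e = d @ [y, y]" "x < y"
      unfolding ends_in_plateau_above_def by blast
    then have "e @ [x] = d @ [y, y, x] @ [] \<and> x < y"
      by simp
    then show ?thesis
      unfolding contains_110_iff by blast
  qed
qed

lemma finite_inv_seqs: "finite (inv_seqs n)"
proof (rule finite_subset)
  show "inv_seqs n \<subseteq> {xs. set xs \<subseteq> {..<n} \<and> length xs = n}"
    by (force simp: inv_seqs_def in_set_conv_nth)
  show "finite {xs. set xs \<subseteq> {..<n} \<and> length xs = n}"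
    by (rule finite_lists_length_eq) simp
qed

lemma finite_avoid_seqs: "finite (avoid_seqs p n)"
  using finite_inv_seqs by (simp add: avoid_seqs_def)

lemma append_in_inv_seqs_iff: "e @ [x] \<in> inv_seqs (Suc m) \<longleftrightarrow> e \<in> inv_seqs m \<and> x \<le> m"
proof (cases "length e = m")
  case True
  then have "e @ [x] \<in> inv_seqs (Suc m) \<longleftrightarrow> (\<forall>i<Suc m. (e @ [x]) ! i < i + 1)"
    by (simp add: inv_seqs_def)
  also have "\<dots> \<longleftrightarrow> (e @ [x]) ! m < m + 1 \<and> (\<forall>i<m. (e @ [x]) ! i < i + 1)"
    by (rule All_less_Suc)
  also have "\<dots> \<longleftrightarrow> x \<le> m \<and> (\<forall>i<m. e ! i < i + 1)"
    using True by (auto simp: nth_append)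
  also have "\<dots> \<longleftrightarrow> e \<in> inv_seqs m \<and> x \<le> m"
    using True by (auto simp: inv_seqs_def)
  finally show ?thesis .
qed (simp add: inv_seqs_def)

lemma last_inv_seqs_less:
  assumes "e \<in> inv_seqs n" and "e \<noteq> []"
  shows "last e < n"
proof -
  have len: "length e = n" and "n > 0" and "\<forall>i<n. e ! i < Suc i"
    using assms by (auto simp: inv_seqs_def)
  then have "e ! (n - 1) < Suc (n - 1)"
    by (metis diff_less zero_less_one)
  then show ?thesis
    using len \<open>n > 0\<close> assms(2) by (simp add: last_conv_nth)
qed

lemma append_in_avoid_110_iff:
  "e @ [x] \<in> avoid_seqs [1, 1, 0] (Suc m) \<longleftrightarrow>
     e \<in> avoid_seqs [1, 1, 0] m \<and> x \<le> m \<and> \<not> ends_in_plateau_above x e"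
  unfolding avoid_seqs_def mem_Collect_eq append_in_inv_seqs_iff contains_110_snoc by blast

lemma avoid_seqs_Suc_eq_snoc:
  assumes "e \<in> avoid_seqs p (Suc m)"
  shows "e = butlast e @ [last e]"
proof -
  have "length e = Suc m"
    using assms by (simp add: avoid_seqs_def inv_seqs_def)
  then show ?thesis
    by (metis append_butlast_last_id list.size(3) nat.distinct(1))
qed

lemma avoid_110_last_eq:
  assumes "K \<le> m"
  shows "{e \<in> avoid_seqs [1, 1, 0] (Suc m). last e = K} =
    (\<lambda>e. e @ [K]) ` {e \<in> avoid_seqs [1, 1, 0] m. \<not> ends_in_plateau_above K e}"
proof (intro equalityI subsetI)
  fix e assume "e \<in> {e \<in> avoid_seqs [1, 1, 0] (Suc m). last e = K}"
  then have "butlast e @ [K] \<in> avoid_seqs [1, 1, 0] (Suc m)" "e = butlast e @ [K]"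
    using avoid_seqs_Suc_eq_snoc by auto
  then show "e \<in> (\<lambda>e. e @ [K]) ` {e \<in> avoid_seqs [1, 1, 0] m. \<not> ends_in_plateau_above K e}"
    unfolding append_in_avoid_110_iff by blast
next
  fix e assume "e \<in> (\<lambda>e. e @ [K]) ` {e \<in> avoid_seqs [1, 1, 0] m. \<not> ends_in_plateau_above K e}"
  then show "e \<in> {e \<in> avoid_seqs [1, 1, 0] (Suc m). last e = K}"
    using assms append_in_avoid_110_iff by auto
qed

lemma avoid_110_plateau_above:
  "{e \<in> avoid_seqs [1, 1, 0] (Suc m). ends_in_plateau_above K e} =
    (\<Union>j\<in>{K<..<m}. (\<lambda>e. e @ [j]) ` {e \<in> avoid_seqs [1, 1, 0] m. last e = j})"
proof (intro equalityI subsetI)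
  fix e assume "e \<in> {e \<in> avoid_seqs [1, 1, 0] (Suc m). ends_in_plateau_above K e}"
  then obtain d y where e: "e = (d @ [y]) @ [y]" "K < y" "e \<in> avoid_seqs [1, 1, 0] (Suc m)"
    unfolding ends_in_plateau_above_def by auto
  then have "d @ [y] \<in> avoid_seqs [1, 1, 0] m"
    using append_in_avoid_110_iff by blast
  moreover have "y < m"
    using calculation last_inv_seqs_less[of "d @ [y]" m] by (simp add: avoid_seqs_def)
  ultimately show "e \<in> (\<Union>j\<in>{K<..<m}. (\<lambda>e. e @ [j]) ` {e \<in> avoid_seqs [1, 1, 0] m. last e = j})"
    using e by (intro UN_I[of y] image_eqI[of _ _ "d @ [y]"]) auto
next
  fix e assume "e \<in> (\<Union>j\<in>{K<..<m}. (\<lambda>e. e @ [j]) ` {e \<in> avoid_seqs [1, 1, 0] m. last e = j})"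
  then obtain j e' where j: "K < j" "j < m" and e': "e' \<in> avoid_seqs [1, 1, 0] m" "last e' = j"
    and e: "e = e' @ [j]" by auto
  have "m > 0" using j by simp
  then have e'_snoc: "e' = butlast e' @ [j]"
    using e' avoid_seqs_Suc_eq_snoc[of e'] by (metis Suc_pred)
  have "\<not> ends_in_plateau_above j e'"
    using e'(2) unfolding ends_in_plateau_above_def by auto
  then have "e \<in> avoid_seqs [1, 1, 0] (Suc m)"
    using e e' j append_in_avoid_110_iff by simp
  moreover have "ends_in_plateau_above K e"
    unfolding ends_in_plateau_above_def using e e'_snoc j by (metis append.assoc append_Cons append_Nil)
  ultimately show "e \<in> {e \<in> avoid_seqs [1, 1, 0] (Suc m). ends_in_plateau_above K e}" by simp
qed

lemma card_avoid_110_last: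
  assumes "K \<le> m"
  shows "card {e \<in> avoid_seqs [1, 1, 0] (Suc m). last e = K}
    + (\<Sum>j\<in>{K<..<m - 1}. card {e \<in> avoid_seqs [1, 1, 0] (m - 1). last e = j})
    = card (avoid_seqs [1, 1, 0] m)"
proof -
  let ?A = "avoid_seqs [1, 1, 0]" and ?P = "ends_in_plateau_above K"
  have "card {e \<in> ?A (Suc m). last e = K} = card {e \<in> ?A m. \<not> ?P e}"
    unfolding avoid_110_last_eq[OF assms] by (rule card_image) (simp add: inj_on_def)
  moreover have "card {e \<in> ?A m. ?P e} = (\<Sum>j\<in>{K<..<m - 1}. card {e \<in> ?A (m - 1). last e = j})"
  proof (cases m)
    case 0
    then show ?thesis
      unfolding ends_in_plateau_above_def avoid_seqs_def inv_seqs_def by auto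
  next
    case (Suc m')
    then have "card {e \<in> ?A m. ?P e}
        = card (\<Union>j\<in>{K<..<m'}. (\<lambda>e. e @ [j]) ` {e \<in> ?A m'. last e = j})"
      by (simp only: avoid_110_plateau_above)
    also have "\<dots> = (\<Sum>j\<in>{K<..<m'}. card ((\<lambda>e. e @ [j]) ` {e \<in> ?A m'. last e = j}))"
      by (rule card_UN_disjoint) (auto simp: finite_avoid_seqs)
    also have "\<dots> = (\<Sum>j\<in>{K<..<m'}. card {e \<in> ?A m'. last e = j})"
      by (intro sum.cong refl card_image) (simp add: inj_on_def)
    finally show ?thesis
      using Suc by simp
  qed
  moreover have "card (?A m) = card {e \<in> ?A m. \<not> ?P e} + card {e \<in> ?A m. ?P e}"
    by (subst card_Un_disjoint[symmetric]) (auto intro: arg_cong[where f = card] simp: finite_avoid_seqs)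
  ultimately show ?thesis
    by simp
qed

lemma cntIk_eq_card:
  assumes "0 < m"
  shows "cntIk p (int m) (int K) = int (card {e \<in> avoid_seqs p m. last e = K})"
  using assms by (simp add: cntIk_def)

lemma sum_cntIk_eq_sum_card:
  "(\<Sum>j = int K + 1..int (Suc m) - 3. cntIk p (int (Suc m) - 2) j)
    = (\<Sum>j\<in>{K<..<m - 1}. int (card {e \<in> avoid_seqs p (m - 1). last e = j}))"
proof -
  have "{int K + 1..int (Suc m) - 3} = int ` {K<..<m - 1}"
    by (auto intro!: image_eqI[where x = "nat x" for x])
  then have "(\<Sum>j = int K + 1..int (Suc m) - 3. cntIk p (int (Suc m) - 2) j)
      = (\<Sum>j\<in>{K<..<m - 1}. cntIk p (int (Suc m) - 2) (int j))"
    by (simp add: sum.reindex)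
  also have "\<dots> = (\<Sum>j\<in>{K<..<m - 1}. int (card {e \<in> avoid_seqs p (m - 1). last e = j}))"
  proof (rule sum.cong[OF refl])
    fix j assume "j \<in> {K<..<m - 1}"
    then have pos: "0 < m - 1" and m2: "int (Suc m) - 2 = int (m - 1)"
      by auto
    show "cntIk p (int (Suc m) - 2) (int j) = int (card {e \<in> avoid_seqs p (m - 1). last e = j})"
      unfolding m2 by (rule cntIk_eq_card[OF pos])
  qed
  finally show ?thesis .
qed

theorem mainTheorem10:
  fixes n k :: int
  assumes "n \<ge> 1" and "0 \<le> k" and "k < n"
  shows "cntIk [1,1,0] n k = cntI [1,1,0] (n - 1) - (\<Sum>j = k + 1..n - 3. cntIk [1,1,0] (n - 2) j)"
proof -
  define m K where "m = nat (n - 1)" and "K = nat k"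
  have n: "n = int (Suc m)" and k: "k = int K" and "K \<le> m"
    using assms by (auto simp: m_def K_def)
  have "cntIk [1,1,0] n k = int (card {e \<in> avoid_seqs [1, 1, 0] (Suc m). last e = K})"
    unfolding n k by (rule cntIk_eq_card) simp
  moreover have "cntI [1,1,0] (n - 1) = int (card (avoid_seqs [1, 1, 0] m))"
    using n by (simp add: cntI_def)
  moreover have "(\<Sum>j = k + 1..n - 3. cntIk [1,1,0] (n - 2) j)
      = (\<Sum>j\<in>{K<..<m - 1}. int (card {e \<in> avoid_seqs [1, 1, 0] (m - 1). last e = j}))"
    unfolding n k by (rule sum_cntIk_eq_sum_card)
  ultimately show ?thesis
    using arg_cong[OF card_avoid_110_last[OF \<open>K \<le> m\<close>], of int] by simp
qed

end
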